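(* For each $\gamma\in\Gamma$, $$\sum_{n\ge1}\sum_{\theta\in\Gamma}m^n(\gamma,\theta)\le\sum_{n\ge1}|\gamma|\,\beta(V,\alpha)^n,$$ where $m^n$ is the $n$-th power of the matrix $m(\gamma,\theta)=w(\theta)\mathbf 1\{\gamma\not\sim\theta\}$. In particular, if $\beta(V,\alpha)<1$, then the expected total number of descendants of a finite cycle $\gamma$ in the multitype branching process with mean matrix $m$ is finite.
   Context: Fix $\alpha>0$ and a strictly convex potential $V:\mathbb{Z}^d\to\mathbb{R}^+\cup\{+\infty\}$ with $V(\vec0)=0$. $\Gamma$ is the set of finite cycles of $\mathbb{Z}^d$: a cycle of length $|\gamma|=n\ge2$ on distinct sites $x_1,\dots,x_n$ maps $x_i\mapsto x_{i+1}$ (mod $n$) and fixes other sites, with support $\{\gamma\}=\{x_1,\dots,x_n\}$. $\gamma\not\sim\theta$ means $\{\gamma\}\cap\{\theta\}\neq\emptyset$. $w(\gamma)=\exp\{-\alpha\sum_{x\in\{\gamma\}}V(\gamma(x)-x)\}$ and $\beta(V,\alpha)=\sum_{\theta\in\Gamma,\ \vec0\in\{\theta\}}|\theta|\,w(\theta)$. The $m^n(\gamma,\theta)=\sum_{\gamma_1,\dots,\gamma_{n-1}}m(\gamma,\gamma_1)m(\gamma_1,\gamma_2)\cdots m(\gamma_{n-1},\theta)$ is the mean number of type-$\theta$ individuals in generation $n$ of the multitype branching process started from one individual of type $\gamma$. *)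

theory Defs
  imports "HOL-Analysis.Analysis" "HOL-Combinatorics.Cycles"
begin

type_synonym 'd site = "int ^ 'd"

definition to_real :: "'d::finite site \<Rightarrow> real ^ 'd" where
  "to_real x = (\<chi> i. real_of_int (x $ i))"

definition strictly_convex_pot :: "('d::finite site \<Rightarrow> ennreal) \<Rightarrow> bool" where
  "strictly_convex_pot V \<longleftrightarrow>
     (\<exists>f :: real ^ 'd \<Rightarrow> ennreal. (\<forall>x. f (to_real x) = V x) \<and>
        (\<forall>x y t. x \<noteq> y \<longrightarrow> 0 < t \<longrightarrow> t < 1 \<longrightarrow> f x < top \<longrightarrow> f y < top \<longrightarrow>
            f (t *\<^sub>R x + (1 - t) *\<^sub>R y) < ennreal t * f x + ennreal (1 - t) * f y))"

definition Cyc :: "('d::finite site \<Rightarrow> 'd site) set" where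
  "Cyc = {g. \<exists>cs. distinct cs \<and> length cs \<ge> 2 \<and> g = cycle_of_list cs}"

definition supp :: "('d::finite site \<Rightarrow> 'd site) \<Rightarrow> 'd site set" where
  "supp g = {x. g x \<noteq> x}"

definition len :: "('d::finite site \<Rightarrow> 'd site) \<Rightarrow> nat" where
  "len g = card (supp g)"

definition wt :: "real \<Rightarrow> ('d::finite site \<Rightarrow> ennreal) \<Rightarrow> ('d site \<Rightarrow> 'd site) \<Rightarrow> ennreal" where
  "wt \<alpha> V g = (let s = (\<Sum>x\<in>supp g. V (g x - x)) in
                 if s = top then 0 else ennreal (exp (- \<alpha> * enn2real s)))"

definition beta :: "('d::finite site \<Rightarrow> ennreal) \<Rightarrow> real \<Rightarrow> ennreal" where
  "beta V \<alpha> = (\<Sum>\<^sub>\<infinity>\<theta>\<in>{\<theta>\<in>Cyc. 0 \<in> supp \<theta>}. of_nat (len \<theta>) * wt \<alpha> V \<theta>)"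

text \<open>Mean matrix m(g,th) = w(th) * 1{supports intersect}.\<close>
definition mmat :: "real \<Rightarrow> ('d::finite site \<Rightarrow> ennreal) \<Rightarrow> ('d site \<Rightarrow> 'd site) \<Rightarrow> ('d site \<Rightarrow> 'd site) \<Rightarrow> ennreal" where
  "mmat \<alpha> V g \<theta> = (if supp g \<inter> supp \<theta> \<noteq> {} then wt \<alpha> V \<theta> else 0)"

text \<open>Matrix powers m^n (n >= 1) indexed by Gamma; mpow n = m^(n+1).\<close>
fun mpow :: "real \<Rightarrow> ('d::finite site \<Rightarrow> ennreal) \<Rightarrow> nat \<Rightarrow> ('d site \<Rightarrow> 'd site) \<Rightarrow> ('d site \<Rightarrow> 'd site) \<Rightarrow> ennreal" where
  "mpow \<alpha> V 0 g \<theta> = mmat \<alpha> V g \<theta>"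
| "mpow \<alpha> V (Suc n) g \<theta> = (\<Sum>\<^sub>\<infinity>\<eta>\<in>Cyc. mpow \<alpha> V n g \<eta> * mmat \<alpha> V \<eta> \<theta>)"

end

theory Submission
  imports Defs
begin

text \<open>Bounding a single type by the weighted quantity \<open>|\<theta>|\<close> turns the question into a
  Lyapunov-type estimate: for every cycle \<open>\<eta>\<close>,
  \<open>\<Sum>\<^sub>\<theta> m(\<eta>,\<theta>) |\<theta>| \<le> |\<eta>| \<beta>\<close>, since a cycle \<open>\<theta>\<close> meeting \<open>\<eta>\<close> passes through
  some site \<open>x\<close> of \<open>\<eta>\<close>, and by translation invariance the \<open>|\<theta>|\<close>-weighted mass of
  the cycles through \<open>x\<close> is \<open>\<beta>\<close>. Iterating (Tonelli) gives
  \<open>\<Sum>\<^sub>\<theta> m\<^sup>n(\<gamma>,\<theta>) \<le> \<Sum>\<^sub>\<theta> m\<^sup>n(\<gamma>,\<theta>) |\<theta>| \<le> |\<gamma>| \<beta>\<^sup>n\<close>.\<close>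

text \<open>The library name \<open>summable_on_ennreal\<close> is bound to the \<open>enat\<close> variant, so the
  plain \<open>ennreal\<close> fact is restated.\<close>
lemma ennreal_summable_on [simp]: "(f :: 'a \<Rightarrow> ennreal) summable_on A"
  by (simp add: nonneg_summable_on_complete)

lemma infsum_cmult_right_ennreal:
  "(\<Sum>\<^sub>\<infinity>x\<in>A. c * f x) = c * (\<Sum>\<^sub>\<infinity>x\<in>A. (f x :: ennreal))"
  by (simp add: nonneg_infsum_complete SUP_mult_left_ennreal sum_distrib_left)

lemma infsum_cmult_left_ennreal:
  "(\<Sum>\<^sub>\<infinity>x\<in>A. f x * c) = (\<Sum>\<^sub>\<infinity>x\<in>A. (f x :: ennreal)) * c"
  using infsum_cmult_right_ennreal[of c f A] by (simp add: mult.commute)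

lemma has_sum_sum:
  fixes f :: "'i \<Rightarrow> 'a \<Rightarrow> 'b::topological_comm_monoid_add"
  assumes "finite I" "\<And>i. i \<in> I \<Longrightarrow> (f i has_sum s i) A"
  shows "((\<lambda>x. \<Sum>i\<in>I. f i x) has_sum (\<Sum>i\<in>I. s i)) A"
  using assms by (induction I rule: finite_induct) (auto intro: has_sum_add)

lemma infsum_sum_ennreal:
  assumes "finite I"
  shows "(\<Sum>\<^sub>\<infinity>x\<in>A. \<Sum>i\<in>I. f i x) = (\<Sum>i\<in>I. \<Sum>\<^sub>\<infinity>x\<in>A. (f i x :: ennreal))"
  by (rule infsumI, rule has_sum_sum[OF assms]) (simp add: has_sum_infsum)

lemma infsum_swap_ennreal:
  "(\<Sum>\<^sub>\<infinity>a\<in>A. \<Sum>\<^sub>\<infinity>b\<in>B. f a b) = (\<Sum>\<^sub>\<infinity>b\<in>B. \<Sum>\<^sub>\<infinity>a\<in>A. (f a b :: ennreal))"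
proof -
  have le: "(\<Sum>\<^sub>\<infinity>a\<in>A. \<Sum>\<^sub>\<infinity>b\<in>B. g a b) \<le> (\<Sum>\<^sub>\<infinity>b\<in>B. \<Sum>\<^sub>\<infinity>a\<in>A. g a b)"
    for A :: "'x set" and B :: "'y set" and g :: "'x \<Rightarrow> 'y \<Rightarrow> ennreal"
  proof (rule infsum_le_finite_sums)
    fix F assume F: "finite F" "F \<subseteq> A"
    have "(\<Sum>a\<in>F. \<Sum>\<^sub>\<infinity>b\<in>B. g a b) = (\<Sum>\<^sub>\<infinity>b\<in>B. \<Sum>a\<in>F. g a b)"
      by (simp add: infsum_sum_ennreal[OF F(1)])
    also have "\<dots> \<le> (\<Sum>\<^sub>\<infinity>b\<in>B. \<Sum>\<^sub>\<infinity>a\<in>A. g a b)"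
    proof (rule infsum_mono)
      fix b
      show "(\<Sum>a\<in>F. g a b) \<le> (\<Sum>\<^sub>\<infinity>a\<in>A. g a b)"
        using infsum_mono_neutral[of "\<lambda>a. g a b" F "\<lambda>a. g a b" A] F by auto
    qed simp_all
    finally show "(\<Sum>a\<in>F. \<Sum>\<^sub>\<infinity>b\<in>B. g a b) \<le> (\<Sum>\<^sub>\<infinity>b\<in>B. \<Sum>\<^sub>\<infinity>a\<in>A. g a b)" .
  qed simp
  show ?thesis by (rule antisym[OF le le])
qed

lemma suminf_geometric_ennreal_less_top:
  fixes b c :: ennreal
  assumes "c < top" "b < 1"
  shows "(\<Sum>n. c * b ^ Suc n) < top"
proof -
  obtain b' c' where b': "b = ennreal b'" "0 \<le> b'" "b' < 1" and c': "c = ennreal c'" "0 \<le> c'"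
    using assms by (cases b; cases c) (auto simp: ennreal_less_iff)
  have "c * b ^ Suc n = ennreal (c' * b' ^ Suc n)" for n
    using b' c' by (simp add: ennreal_mult ennreal_power)
  then have "(\<Sum>n. c * b ^ Suc n) = ennreal (\<Sum>n. c' * b' ^ Suc n)"
    using b' c' by (simp add: suminf_ennreal2 summable_mult summable_geometric)
  then show ?thesis by simp
qed

lemma supp_cycle_of_list:
  assumes "distinct cs" "length cs \<ge> 2"
  shows "supp (cycle_of_list cs) = set cs"
proof
  show "supp (cycle_of_list cs) \<subseteq> set cs"
    using id_outside_supp unfolding supp_def by fastforce
  show "set cs \<subseteq> supp (cycle_of_list cs)"
  proof
    fix x assume "x \<in> set cs"
    then obtain i where i: "i < length cs" "x = cs ! i" by (auto simp: in_set_conv_nth)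
    have "map (cycle_of_list cs) cs = rotate1 cs"
      using cyclic_rotation[OF assms(1), of 1] by simp
    then have "cycle_of_list cs x = cs ! (Suc i mod length cs)"
      using i by (metis nth_map nth_rotate1)
    also have "\<dots> \<noteq> x"
    proof -
      have "Suc i mod length cs \<noteq> i" "Suc i mod length cs < length cs"
        using i assms(2) by (auto simp: mod_Suc)
      then show ?thesis
        using i nth_eq_iff_index_eq[OF assms(1), of "Suc i mod length cs" i] by simp
    qed
    finally show "x \<in> supp (cycle_of_list cs)" unfolding supp_def by simp
  qed
qed

lemma Cyc_cases:
  assumes "\<theta> \<in> Cyc"
  obtains cs where "distinct cs" "length cs \<ge> 2" "\<theta> = cycle_of_list cs"
  using assms unfolding Cyc_def by blast

lemma finite_supp_Cyc: "\<theta> \<in> Cyc \<Longrightarrow> finite (supp \<theta>)"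
  by (erule Cyc_cases) (simp add: supp_cycle_of_list)

lemma len_Cyc_ge_2: "\<theta> \<in> Cyc \<Longrightarrow> len \<theta> \<ge> 2"
  by (erule Cyc_cases) (simp add: len_def supp_cycle_of_list distinct_card)

definition translate :: "'d::finite site \<Rightarrow> ('d site \<Rightarrow> 'd site) \<Rightarrow> 'd site \<Rightarrow> 'd site" where
  "translate x \<theta> = (\<lambda>y. \<theta> (y - x) + x)"

lemma translate_translate_neg [simp]: "translate (- x) (translate x \<theta>) = \<theta>"
  unfolding translate_def by auto

lemma translate_neg_translate [simp]: "translate x (translate (- x) \<theta>) = \<theta>"
  using translate_translate_neg[of "- x"] by simp

lemma translate_Cyc:
  assumes "\<theta> \<in> Cyc" shows "translate x \<theta> \<in> Cyc"
proof -
  obtain cs where cs: "distinct cs" "length cs \<ge> 2" "\<theta> = cycle_of_list cs"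
    using assms by (rule Cyc_cases)
  have bij: "bij (\<lambda>y. y + x)"
    by (rule bij_betw_byWitness[where f'="\<lambda>y. y - x"]) auto
  have "inv (\<lambda>y. y + x) = (\<lambda>y. y - x)"
    by (rule inv_equality) auto
  then have "translate x \<theta> = cycle_of_list (map (\<lambda>y. y + x) cs)"
    using conjugation_of_cycle[OF cs(1) bij] cs(3) unfolding translate_def by (simp add: o_def)
  moreover have "distinct (map (\<lambda>y. y + x) cs)"
    using cs(1) by (simp add: distinct_map inj_on_def)
  ultimately show ?thesis using cs(2) unfolding Cyc_def by auto
qed

lemma supp_translate: "supp (translate x \<theta>) = (\<lambda>y. y + x) ` supp \<theta>"
  unfolding supp_def translate_def
  by (auto simp: image_iff algebra_simps intro!: exI[where x="_ - x"])

lemma len_translate [simp]: "len (translate x \<theta>) = len \<theta>"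
  unfolding len_def supp_translate by (simp add: card_image inj_on_def)

lemma wt_translate [simp]: "wt \<alpha> V (translate x \<theta>) = wt \<alpha> V \<theta>"
proof -
  have "(\<Sum>y\<in>supp (translate x \<theta>). V (translate x \<theta> y - y)) = (\<Sum>z\<in>supp \<theta>. V (\<theta> z - z))"
    unfolding supp_translate by (subst sum.reindex) (auto simp: inj_on_def translate_def)
  then show ?thesis unfolding wt_def by simp
qed

definition Cyc_through :: "'d::finite site \<Rightarrow> ('d site \<Rightarrow> 'd site) set" where
  "Cyc_through x = {\<theta> \<in> Cyc. x \<in> supp \<theta>}"

lemma bij_betw_translate_Cyc_through:
  "bij_betw (translate x) (Cyc_through 0) (Cyc_through x)"
  by (rule bij_betw_byWitness[where f'="translate (- x)"])
     (auto simp: Cyc_through_def translate_Cyc supp_translate image_iff)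

lemma beta_Cyc_through:
  "(\<Sum>\<^sub>\<infinity>\<theta>\<in>Cyc_through x. of_nat (len \<theta>) * wt \<alpha> V \<theta>) = beta V \<alpha>"
  using infsum_reindex_bij_betw[OF bij_betw_translate_Cyc_through,
      of "\<lambda>\<theta>. of_nat (len \<theta>) * wt \<alpha> V \<theta>" x]
  by (simp add: beta_def Cyc_through_def)

lemma mmat_len_row_sum_le:
  assumes "\<eta> \<in> Cyc"
  shows "(\<Sum>\<^sub>\<infinity>\<theta>\<in>Cyc. mmat \<alpha> V \<eta> \<theta> * of_nat (len \<theta>)) \<le> of_nat (len \<eta>) * beta V \<alpha>"
proof -
  define g where "g x \<theta> = (if \<theta> \<in> Cyc_through x then of_nat (len \<theta>) * wt \<alpha> V \<theta> else 0)"
    for x \<theta>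
  have fin: "finite (supp \<eta>)" using assms by (rule finite_supp_Cyc)
  have "mmat \<alpha> V \<eta> \<theta> * of_nat (len \<theta>) \<le> (\<Sum>x\<in>supp \<eta>. g x \<theta>)" if "\<theta> \<in> Cyc" for \<theta>
  proof (cases "supp \<eta> \<inter> supp \<theta> = {}")
    case False
    then obtain x where x: "x \<in> supp \<eta>" "x \<in> supp \<theta>" by blast
    then have "mmat \<alpha> V \<eta> \<theta> * of_nat (len \<theta>) = g x \<theta>"
      using that by (auto simp: mmat_def g_def Cyc_through_def mult.commute)
    also have "\<dots> \<le> (\<Sum>x\<in>supp \<eta>. g x \<theta>)"
      using x(1) fin by (intro member_le_sum) auto
    finally show ?thesis .
  qed (simp add: mmat_def)
  then have "(\<Sum>\<^sub>\<infinity>\<theta>\<in>Cyc. mmat \<alpha> V \<eta> \<theta> * of_nat (len \<theta>)) \<le> (\<Sum>\<^sub>\<infinity>\<theta>\<in>Cyc. \<Sum>x\<in>supp \<eta>. g x \<theta>)"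
    by (intro infsum_mono) auto
  also have "\<dots> = (\<Sum>x\<in>supp \<eta>. \<Sum>\<^sub>\<infinity>\<theta>\<in>Cyc. g x \<theta>)"
    using fin by (rule infsum_sum_ennreal)
  also have "\<dots> \<le> (\<Sum>x\<in>supp \<eta>. beta V \<alpha>)"
  proof (rule sum_mono)
    fix x
    have "(\<Sum>\<^sub>\<infinity>\<theta>\<in>Cyc. g x \<theta>) \<le> (\<Sum>\<^sub>\<infinity>\<theta>\<in>Cyc_through x. of_nat (len \<theta>) * wt \<alpha> V \<theta>)"
      by (intro infsum_mono_neutral) (auto simp: g_def Cyc_through_def)
    then show "(\<Sum>\<^sub>\<infinity>\<theta>\<in>Cyc. g x \<theta>) \<le> beta V \<alpha>" by (simp add: beta_Cyc_through)
  qed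
  also have "\<dots> = of_nat (len \<eta>) * beta V \<alpha>" by (simp add: len_def)
  finally show ?thesis .
qed

lemma mpow_len_row_sum_le:
  assumes "\<gamma> \<in> Cyc"
  shows "(\<Sum>\<^sub>\<infinity>\<theta>\<in>Cyc. mpow \<alpha> V n \<gamma> \<theta> * of_nat (len \<theta>)) \<le> of_nat (len \<gamma>) * beta V \<alpha> ^ Suc n"
proof (induction n)
  case 0
  then show ?case using mmat_len_row_sum_le[OF assms] by simp
next
  case (Suc n)
  have "(\<Sum>\<^sub>\<infinity>\<theta>\<in>Cyc. mpow \<alpha> V (Suc n) \<gamma> \<theta> * of_nat (len \<theta>))
      = (\<Sum>\<^sub>\<infinity>\<theta>\<in>Cyc. \<Sum>\<^sub>\<infinity>\<eta>\<in>Cyc. mpow \<alpha> V n \<gamma> \<eta> * (mmat \<alpha> V \<eta> \<theta> * of_nat (len \<theta>)))"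
    by (simp add: infsum_cmult_left_ennreal[symmetric] mult.assoc)
  also have "\<dots> = (\<Sum>\<^sub>\<infinity>\<eta>\<in>Cyc. mpow \<alpha> V n \<gamma> \<eta> * (\<Sum>\<^sub>\<infinity>\<theta>\<in>Cyc. mmat \<alpha> V \<eta> \<theta> * of_nat (len \<theta>)))"
    by (simp add: infsum_swap_ennreal[of _ Cyc] infsum_cmult_right_ennreal)
  also have "\<dots> \<le> (\<Sum>\<^sub>\<infinity>\<eta>\<in>Cyc. mpow \<alpha> V n \<gamma> \<eta> * (of_nat (len \<eta>) * beta V \<alpha>))"
    by (intro infsum_mono mult_left_mono mmat_len_row_sum_le) auto
  also have "\<dots> = (\<Sum>\<^sub>\<infinity>\<eta>\<in>Cyc. mpow \<alpha> V n \<gamma> \<eta> * of_nat (len \<eta>)) * beta V \<alpha>"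
    by (simp add: infsum_cmult_left_ennreal[symmetric] mult.assoc)
  also have "\<dots> \<le> of_nat (len \<gamma>) * beta V \<alpha> ^ Suc (Suc n)"
    using mult_right_mono[OF Suc.IH, of "beta V \<alpha>"] by (simp add: ac_simps)
  finally show ?case .
qed

lemma mpow_row_sum_le:
  assumes "\<gamma> \<in> Cyc"
  shows "(\<Sum>\<^sub>\<infinity>\<theta>\<in>Cyc. mpow \<alpha> V n \<gamma> \<theta>) \<le> of_nat (len \<gamma>) * beta V \<alpha> ^ Suc n"
proof -
  have "mpow \<alpha> V n \<gamma> \<theta> \<le> mpow \<alpha> V n \<gamma> \<theta> * of_nat (len \<theta>)" if "\<theta> \<in> Cyc" for \<theta>
    using mult_left_mono[of 1 "of_nat (len \<theta>)" "mpow \<alpha> V n \<gamma> \<theta>"] len_Cyc_ge_2[OF that] by simp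
  then have "(\<Sum>\<^sub>\<infinity>\<theta>\<in>Cyc. mpow \<alpha> V n \<gamma> \<theta>) \<le> (\<Sum>\<^sub>\<infinity>\<theta>\<in>Cyc. mpow \<alpha> V n \<gamma> \<theta> * of_nat (len \<theta>))"
    by (intro infsum_mono) auto
  also have "\<dots> \<le> of_nat (len \<gamma>) * beta V \<alpha> ^ Suc n"
    using assms by (rule mpow_len_row_sum_le)
  finally show ?thesis .
qed

theorem lemma3p6:
  fixes V :: "int ^ 'd::finite \<Rightarrow> ennreal" and \<alpha> :: real and \<gamma> :: "int ^ 'd \<Rightarrow> int ^ 'd"
  assumes "\<alpha> > 0" and "strictly_convex_pot V" and "V 0 = 0" and "\<gamma> \<in> Cyc"
  shows "(\<Sum>n. \<Sum>\<^sub>\<infinity>\<theta>\<in>Cyc. mpow \<alpha> V n \<gamma> \<theta>) \<le> (\<Sum>n. of_nat (len \<gamma>) * beta V \<alpha> ^ Suc n)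
         \<and> (beta V \<alpha> < 1 \<longrightarrow> (\<Sum>n. \<Sum>\<^sub>\<infinity>\<theta>\<in>Cyc. mpow \<alpha> V n \<gamma> \<theta>) < top)"
proof -
  have "(\<Sum>n. \<Sum>\<^sub>\<infinity>\<theta>\<in>Cyc. mpow \<alpha> V n \<gamma> \<theta>) \<le> (\<Sum>n. of_nat (len \<gamma>) * beta V \<alpha> ^ Suc n)"
    using mpow_row_sum_le[OF assms(4)] by (intro suminf_le) auto
  moreover have "(\<Sum>n. of_nat (len \<gamma>) * beta V \<alpha> ^ Suc n) < top" if "beta V \<alpha> < 1"
    using that by (intro suminf_geometric_ennreal_less_top) (simp_all add: of_nat_less_top)
  ultimately show ?thesis by (meson le_less_trans)
qed

end
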